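(* Assume the linear model $X_a=X^a\theta^0_a+\epsilon_a$ and that $S_0$ satisfies the $\Delta$-compatibility condition for some $\Delta>0$ with constant $\phi_{0,a}>0$. Then on the event $\Lambda_a$, for $\lambda\ge2\lambda_0$, $\mu\ge2\mu_0$ and $\lambda\ge(3+\frac{14}{\Delta})B\mu$, $$\frac1n\|X^a(\hat\theta^{\lambda,\mu}_a-\theta^0_a)\|_2^2+(\lambda-3B\mu)\|\hat\theta^{\lambda,\mu}_a-\theta^0_a\|_1\le\frac{s_0(2\lambda+B\mu)^2}{\phi_{0,a}^2}.$$
   Context: Fix a node $a$. $X_a\in\mathbb{R}^n$ is the observed $a$-th variable, $X^a$ the $n\times p$ observation matrix with $a$-th column set to zero, $X^a_j$ its $j$-th column, $\theta^0_a$ the true coefficient vector, $\epsilon_a$ the noise. $S_0=\{j:\theta^0_{a,j}\neq0\}$, $s_0=|S_0|$. For $S\subseteq\{1,\dots,p\}$, $\theta_S$ has entries $\theta_j\mathbf{1}\{j\in S\}$ and $\theta_{S^c}$ entries $\theta_j\mathbf{1}\{j\notin S\}$. The local difference matrix $D^a$: from a known local neighborhood graph with edge set $E_{\rm local}$, $D$ has a row $e_i-e_j$ per edge $\{i,j\}$, $i<j$; $D^a$ keeps rows with $a$-th entry $0$. $B$ bounds the number of nonzero entries in any column of $D^a$. $\hat\theta^{\lambda,\mu}_a=\operatorname{argmin}_{\theta_a}\big[\frac1n\|X_a-X^a\theta_a\|_2^2+\lambda\|\theta_a\|_1+\mu\|D^a\theta_a\|_1\big]$. For $\lambda_0,\mu_0>0$,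 $\Lambda_a:=\{\max_{j\neq a}\frac2n|\epsilon_a'X^a_j|\le\lambda_0+B\mu_0\}$. $\Delta$-compatibility condition: for all $\theta\in\mathbb{R}^p$ with $\|\theta_{S_0^c}\|_1\le(3+\Delta)\|\theta_{S_0}\|_1$ one has $\|\theta_{S_0}\|_1^2\le\frac{s_0\,\theta'X^{a\prime}X^a\theta}{n\phi_{0,a}^2}$. *)

theory Defs
  imports "HOL-Analysis.Analysis"
begin

text \<open>Rows of observations indexed by the finite type 'n (so n = CARD('n)),
variables indexed by the finite linearly ordered type 'p (so p = CARD('p)).\<close>

definition l1norm :: "real^'p \<Rightarrow> real" where
  "l1norm v = (\<Sum>j\<in>UNIV. \<bar>v $ j\<bar>)"

definition restrict_vec :: "'p set \<Rightarrow> real^'p \<Rightarrow> real^'p" where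
  "restrict_vec S v = (\<chi> j. if j \<in> S then v $ j else 0)"

definition obs_col :: "real^'p^'n \<Rightarrow> 'p \<Rightarrow> real^'n" where
  "obs_col X a = (\<chi> i. X $ i $ a)"

definition obs_minus :: "real^'p^'n \<Rightarrow> 'p \<Rightarrow> real^'p^'n" where
  "obs_minus X a = (\<chi> i k. if k = a then 0 else X $ i $ k)"

definition Drow :: "'p \<times> 'p \<Rightarrow> real^'p" where
  "Drow e = axis (fst e) 1 - axis (snd e) 1"

text \<open>Rows kept in D^a: edges whose row has a-th entry 0.\<close>
definition local_edges :: "('p::finite \<times> 'p) set \<Rightarrow> 'p \<Rightarrow> ('p \<times> 'p) set" where
  "local_edges E a = {e \<in> E. Drow e $ a = 0}"

definition Dnorm :: "('p::finite \<times> 'p) set \<Rightarrow> 'p \<Rightarrow> real^'p \<Rightarrow> real" where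
  "Dnorm E a v = (\<Sum>e\<in>local_edges E a. \<bar>Drow e \<bullet> v\<bar>)"

definition objective :: "real^'p^'n \<Rightarrow> 'p \<Rightarrow> ('p::finite \<times> 'p) set \<Rightarrow> real \<Rightarrow> real \<Rightarrow> real^'p \<Rightarrow> real" where
  "objective X a E lam mu v =
     (1 / real CARD('n)) * (norm (obs_col X a - obs_minus X a *v v))\<^sup>2
     + lam * l1norm v + mu * Dnorm E a v"

definition compatible :: "real^'p^'n \<Rightarrow> 'p \<Rightarrow> 'p set \<Rightarrow> real \<Rightarrow> real \<Rightarrow> bool" where
  "compatible X a S0 Delta phi \<longleftrightarrow>
     (\<forall>v::real^'p. l1norm (restrict_vec (- S0) v) \<le> (3 + Delta) * l1norm (restrict_vec S0 v) \<longrightarrow>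
        (l1norm (restrict_vec S0 v))\<^sup>2 \<le>
          real (card S0) * ((obs_minus X a *v v) \<bullet> (obs_minus X a *v v)) / (real CARD('n) * phi\<^sup>2))"

end

theory Submission imports Defs begin

text \<open>Let \<open>h\<close> be the estimation error. Comparing the objective at the minimiser with its
value at \<open>\<theta>\<^sup>0\<close> gives the basic inequality. On \<open>\<Lambda>\<^sub>a\<close> the noise term is at most
\<open>(\<lambda> + B\<mu>)\<parallel>h\<parallel>\<^sub>1/2\<close>, and since every column of \<open>D\<^sup>a\<close> has at most \<open>B\<close> nonzero entries, all of
modulus one, the fusion penalty changes by at most \<open>B\<mu>\<parallel>h\<parallel>\<^sub>1\<close>. Splitting \<open>h\<close> along \<open>S\<^sub>0\<close> yields
\<open>2\<parallel>X\<^sup>ah\<parallel>\<^sup>2/n + (\<lambda> - 3B\<mu>)\<parallel>h\<^bsub>S\<^sub>0\<^sup>c\<^esub>\<parallel>\<^sub>1 \<le> 3(\<lambda> + B\<mu>)\<parallel>h\<^bsub>S\<^sub>0\<^esub>\<parallel>\<^sub>1\<close>.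
The condition \<open>\<lambda> \<ge> (3 + 14/\<Delta>)B\<mu>\<close> gives \<open>3(\<lambda> + B\<mu>) \<le> (3 + \<Delta>)(\<lambda> - 3B\<mu>)\<close>, so \<open>h\<close> lies in
the cone of the compatibility condition, which bounds \<open>\<parallel>h\<^bsub>S\<^sub>0\<^esub>\<parallel>\<^sub>1\<close> by the prediction error;
\<open>2xy \<le> x\<^sup>2 + y\<^sup>2\<close> finishes the proof.\<close>

lemma l1norm_nonneg: "0 \<le> l1norm v"
  unfolding l1norm_def by (simp add: sum_nonneg)

lemma l1norm_restrict_split:
  "l1norm v = l1norm (restrict_vec S v) + l1norm (restrict_vec (-S) v)"
  unfolding l1norm_def restrict_vec_def
  by (subst sum.distrib[symmetric]) (rule sum.cong, auto)

lemma l1norm_add_ge_of_support: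
  assumes "restrict_vec (-S) w = 0"
  shows "l1norm w - l1norm (restrict_vec S d) + l1norm (restrict_vec (-S) d) \<le> l1norm (w + d)"
proof -
  have w_out: "j \<notin> S \<Longrightarrow> w $ j = 0" for j
    using assms by (simp add: restrict_vec_def vec_eq_iff) (metis)
  have "l1norm w - l1norm (restrict_vec S d) + l1norm (restrict_vec (-S) d)
      = (\<Sum>j\<in>UNIV. \<bar>w $ j\<bar> - \<bar>restrict_vec S d $ j\<bar> + \<bar>restrict_vec (-S) d $ j\<bar>)"
    unfolding l1norm_def by (simp add: sum.distrib sum_subtractf)
  also have "\<dots> \<le> l1norm (w + d)"
    unfolding l1norm_def restrict_vec_def
    by (rule sum_mono) (auto simp: w_out abs_if)
  finally show ?thesis .
qed

lemma abs_inner_matrix_vector_le: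
  fixes A :: "real^'m^'n" and x :: "real^'m"
  assumes "\<forall>j. \<bar>e \<bullet> column j A\<bar> \<le> c"
  shows "\<bar>e \<bullet> (A *v x)\<bar> \<le> c * l1norm x"
proof -
  have "\<bar>e \<bullet> (A *v x)\<bar> = \<bar>\<Sum>j\<in>UNIV. x $ j * (e \<bullet> column j A)\<bar>"
    by (simp add: matrix_mult_sum inner_sum_right scalar_mult_eq_scaleR)
  also have "\<dots> \<le> (\<Sum>j\<in>UNIV. \<bar>x $ j\<bar> * c)"
    by (rule order_trans[OF sum_abs], rule sum_mono)
       (simp add: abs_mult assms mult_left_mono)
  also have "\<dots> = c * l1norm x"
    by (simp add: l1norm_def sum_distrib_left mult.commute)
  finally show ?thesis .
qed

lemma column_obs_minus_self: "column a (obs_minus X a) = 0"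
  by (simp add: column_def obs_minus_def vec_eq_iff)

lemma noise_term_le:
  fixes X :: "real^'p^'n::finite"
  assumes "\<forall>j. j \<noteq> a \<longrightarrow> 2 / real CARD('n) * \<bar>eps \<bullet> column j (obs_minus X a)\<bar> \<le> c"
    and "0 \<le> c"
  shows "2 / real CARD('n) * (eps \<bullet> (obs_minus X a *v v)) \<le> c * l1norm v"
proof -
  have "\<forall>j. \<bar>eps \<bullet> column j (obs_minus X a)\<bar> \<le> real CARD('n) / 2 * c"
  proof
    fix j
    show "\<bar>eps \<bullet> column j (obs_minus X a)\<bar> \<le> real CARD('n) / 2 * c"
      using assms by (cases "j = a") (auto simp: column_obs_minus_self field_simps)
  qed
  then have "\<bar>eps \<bullet> (obs_minus X a *v v)\<bar> \<le> real CARD('n) / 2 * c * l1norm v"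
    by (rule abs_inner_matrix_vector_le)
  then show ?thesis by (simp add: field_simps)
qed

lemma abs_Drow_nth_le: "\<bar>Drow e $ j\<bar> \<le> 1"
  unfolding Drow_def axis_def by auto

lemma Dnorm_le_plus_l1norm:
  fixes E :: "('p::finite \<times> 'p) set"
  assumes "\<forall>j. card {e \<in> local_edges E a. Drow e $ j \<noteq> 0} \<le> B"
  shows "Dnorm E a v \<le> Dnorm E a w + real B * l1norm (v - w)"
proof -
  let ?L = "local_edges E a"
  have col_bound: "(\<Sum>e\<in>?L. \<bar>Drow e $ j\<bar>) \<le> real B" for j
  proof -
    have "(\<Sum>e\<in>?L. \<bar>Drow e $ j\<bar>) \<le> (\<Sum>e\<in>?L. if Drow e $ j \<noteq> 0 then 1 else 0)"
      by (rule sum_mono) (use abs_Drow_nth_le in auto)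
    also have "\<dots> = real (card {e \<in> ?L. Drow e $ j \<noteq> 0})"
      by (simp add: sum.inter_filter[symmetric])
    finally show ?thesis using assms by (meson of_nat_le_iff order_trans)
  qed
  have "Dnorm E a v \<le> Dnorm E a w + (\<Sum>e\<in>?L. \<bar>Drow e \<bullet> (v - w)\<bar>)"
    unfolding Dnorm_def sum.distrib[symmetric]
    by (rule sum_mono) (metis abs_triangle_ineq add.commute diff_add_cancel inner_diff_right)
  also have "(\<Sum>e\<in>?L. \<bar>Drow e \<bullet> (v - w)\<bar>) \<le> (\<Sum>e\<in>?L. \<Sum>j\<in>UNIV. \<bar>Drow e $ j\<bar> * \<bar>(v - w) $ j\<bar>)"
    unfolding inner_vec_def by (rule sum_mono, rule order_trans[OF sum_abs]) (simp add: abs_mult)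
  also have "\<dots> = (\<Sum>j\<in>UNIV. \<bar>(v - w) $ j\<bar> * (\<Sum>e\<in>?L. \<bar>Drow e $ j\<bar>))"
    by (subst sum.swap) (simp add: sum_distrib_left mult.commute)
  also have "\<dots> \<le> (\<Sum>j\<in>UNIV. \<bar>(v - w) $ j\<bar> * real B)"
    by (intro sum_mono mult_left_mono col_bound) simp
  also have "\<dots> = real B * l1norm (v - w)"
    by (simp add: l1norm_def sum_distrib_left mult.commute)
  finally show ?thesis by simp
qed

lemma objective_basic_inequality:
  fixes X :: "real^'p::finite^'n::finite"
  assumes model: "obs_col X a = obs_minus X a *v theta0 + eps"
    and min: "objective X a E lam mu thetahat \<le> objective X a E lam mu theta0"
  shows "1 / real CARD('n) * (norm (obs_minus X a *v (thetahat - theta0)))\<^sup>2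
           + lam * l1norm thetahat + mu * Dnorm E a thetahat
         \<le> 2 / real CARD('n) * (eps \<bullet> (obs_minus X a *v (thetahat - theta0)))
           + lam * l1norm theta0 + mu * Dnorm E a theta0"
proof -
  let ?n = "real CARD('n)" and ?u = "obs_minus X a *v (thetahat - theta0)"
  have res: "obs_col X a - obs_minus X a *v thetahat = eps - ?u"
    unfolding model by (simp add: matrix_vector_mult_diff_distrib)
  have "(norm (eps - ?u))\<^sup>2 = (norm eps)\<^sup>2 - 2 * (eps \<bullet> ?u) + (norm ?u)\<^sup>2"
    by (simp add: power2_norm_eq_inner inner_diff_left inner_diff_right inner_commute)
  then have "objective X a E lam mu thetahat = (norm eps)\<^sup>2 / ?n - 2 / ?n * (eps \<bullet> ?u)
      + 1 / ?n * (norm ?u)\<^sup>2 + lam * l1norm thetahat + mu * Dnorm E a thetahat"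
    unfolding objective_def res by (simp add: field_simps)
  moreover have "objective X a E lam mu theta0
      = (norm eps)\<^sup>2 / ?n + lam * l1norm theta0 + mu * Dnorm E a theta0"
    unfolding objective_def model by simp
  ultimately show ?thesis using min by linarith
qed

lemma fused_lasso_key_inequality:
  fixes X :: "real^'p::finite^'n::finite" and E :: "('p \<times> 'p) set"
  assumes B_bound: "\<forall>j. card {e \<in> local_edges E a. Drow e $ j \<noteq> 0} \<le> B"
    and model: "obs_col X a = obs_minus X a *v theta0 + eps"
    and noise: "\<forall>j. j \<noteq> a \<longrightarrow> 2 / real CARD('n) * \<bar>eps \<bullet> column j (obs_minus X a)\<bar> \<le> c"
    and "0 \<le> c" and c_le: "2 * c \<le> lam + real B * mu" and "0 \<le> lam" and "0 \<le> mu"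
    and min: "objective X a E lam mu thetahat \<le> objective X a E lam mu theta0"
    and support: "restrict_vec (-S) theta0 = 0"
  defines "d \<equiv> thetahat - theta0"
  shows "2 * (1 / real CARD('n) * (norm (obs_minus X a *v d))\<^sup>2)
           + (lam - 3 * (real B * mu)) * l1norm (restrict_vec (-S) d)
         \<le> (3 * lam + 3 * (real B * mu)) * l1norm (restrict_vec S d)"
proof -
  have d_split: "l1norm d = l1norm (restrict_vec S d) + l1norm (restrict_vec (-S) d)"
    by (rule l1norm_restrict_split)
  have "2 / real CARD('n) * (eps \<bullet> (obs_minus X a *v d)) \<le> c * l1norm d"
    using noise \<open>0 \<le> c\<close> by (rule noise_term_le)
  also have "\<dots> \<le> (lam + real B * mu) / 2 * l1norm d"
    using c_le by (intro mult_right_mono l1norm_nonneg) simp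
  finally have noise_le: "2 / real CARD('n) * (eps \<bullet> (obs_minus X a *v d))
      \<le> (lam + real B * mu) / 2 * l1norm d" .
  have "l1norm (theta0 - thetahat) = l1norm d"
    by (simp add: d_def l1norm_def abs_minus_commute)
  then have "mu * Dnorm E a theta0 \<le> mu * (Dnorm E a thetahat + real B * l1norm d)"
    using Dnorm_le_plus_l1norm[OF B_bound, of theta0 thetahat] \<open>0 \<le> mu\<close>
    by (intro mult_left_mono) auto
  moreover have "lam * (l1norm theta0 - l1norm (restrict_vec S d) + l1norm (restrict_vec (-S) d))
      \<le> lam * l1norm thetahat"
    using l1norm_add_ge_of_support[OF support, of d] \<open>0 \<le> lam\<close>
    by (intro mult_left_mono) (auto simp: d_def)
  ultimately show ?thesis
    using objective_basic_inequality[OF model min] noise_le unfolding d_def[symmetric] d_split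
    by (simp add: algebra_simps)
qed

lemma compatible_l1norm_restrict_le:
  fixes X :: "real^'p::finite^'n::finite"
  assumes "compatible X a S Delta phi"
    and "l1norm (restrict_vec (-S) v) \<le> (3 + Delta) * l1norm (restrict_vec S v)"
  shows "(l1norm (restrict_vec S v))\<^sup>2
    \<le> real (card S) * (1 / real CARD('n) * (norm (obs_minus X a *v v))\<^sup>2) / phi\<^sup>2"
  using assms by (simp add: compatible_def power2_norm_eq_inner)

lemma cone_condition_of_key:
  fixes A LS LC lam b Delta :: real
  assumes "0 \<le> A" "0 \<le> LS" "0 < Delta" "0 \<le> b" "0 < lam" and lam_ge: "(3 + 14 / Delta) * b \<le> lam"
    and key: "2 * A + (lam - 3 * b) * LC \<le> (3 * lam + 3 * b) * LS"
  shows "LC \<le> (3 + Delta) * LS"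
proof -
  have "Delta * ((3 + 14 / Delta) * b) = 3 * Delta * b + 14 * b"
    using \<open>0 < Delta\<close> by (simp add: field_simps)
  then have scaled: "3 * Delta * b + 14 * b \<le> Delta * lam"
    using mult_left_mono[OF lam_ge, of Delta] \<open>0 < Delta\<close> by simp
  then have par: "3 * lam + 3 * b \<le> (3 + Delta) * (lam - 3 * b)"
    using \<open>0 \<le> b\<close> by (simp add: algebra_simps)
  have gap: "0 < lam - 3 * b"
  proof (cases "b = 0")
    case False
    then have "Delta * (3 * b) < Delta * lam"
      using scaled \<open>0 \<le> b\<close> by simp
    then show ?thesis using \<open>0 < Delta\<close> by simp
  qed (use \<open>0 < lam\<close> in simp)
  have "(lam - 3 * b) * LC \<le> (lam - 3 * b) * ((3 + Delta) * LS)"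
    using key \<open>0 \<le> A\<close> mult_right_mono[OF par \<open>0 \<le> LS\<close>] by (simp add: algebra_simps)
  then show ?thesis using gap by simp
qed

lemma two_mult_le_add_of_power2_le_mult:
  fixes x y z :: real
  assumes "x\<^sup>2 \<le> y * z" "0 \<le> y" "0 \<le> z"
  shows "2 * x \<le> y + z"
proof (rule power2_le_imp_le)
  have "(y + z)\<^sup>2 = (y - z)\<^sup>2 + 4 * (y * z)"
    by (simp add: power2_eq_square algebra_simps)
  moreover have "(2 * x)\<^sup>2 = 4 * x\<^sup>2"
    by (simp add: power_mult_distrib)
  ultimately show "(2 * x)\<^sup>2 \<le> (y + z)\<^sup>2"
    using assms(1) zero_le_power2[of "y - z"] by linarith
qed (use assms(2,3) in simp)

lemma oracle_bound_of_key:
  fixes A LS LC s phi lam b :: real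
  assumes "0 \<le> A" "0 \<le> s"
    and key: "2 * A + (lam - 3 * b) * LC \<le> (3 * lam + 3 * b) * LS"
    and compat: "LS\<^sup>2 \<le> s * A / phi\<^sup>2"
    and "0 \<le> lam" "0 \<le> b"
  shows "A + (lam - 3 * b) * (LS + LC) \<le> s * (2 * lam + b)\<^sup>2 / phi\<^sup>2"
proof -
  define y where "y = s * (2 * lam)\<^sup>2 / phi\<^sup>2"
  have "(2 * lam * LS)\<^sup>2 = (2 * lam)\<^sup>2 * LS\<^sup>2"
    by (simp add: power_mult_distrib)
  also have "\<dots> \<le> (2 * lam)\<^sup>2 * (s * A / phi\<^sup>2)"
    using compat by (rule mult_left_mono) simp
  also have "\<dots> = A * y"
    by (simp add: y_def)
  finally have "(2 * lam * LS)\<^sup>2 \<le> A * y" .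
  moreover have "0 \<le> y" using \<open>0 \<le> s\<close> by (simp add: y_def)
  ultimately have "2 * (2 * lam * LS) \<le> A + y"
    using two_mult_le_add_of_power2_le_mult \<open>0 \<le> A\<close> by blast
  moreover have "y \<le> s * (2 * lam + b)\<^sup>2 / phi\<^sup>2"
    unfolding y_def using assms by (intro divide_right_mono mult_left_mono power_mono) auto
  moreover have "A + (lam - 3 * b) * (LS + LC)
      = 2 * A + (lam - 3 * b) * LC - (3 * lam + 3 * b) * LS + 2 * (2 * lam * LS) - A"
    by (simp add: algebra_simps)
  ultimately show ?thesis using key by linarith
qed

theorem mainTheorem13:
  fixes a :: "'p::{finite,linorder}"
    and X :: "((real, 'p) vec, 'n::finite) vec"
    and theta0 :: "(real, 'p) vec" and eps :: "(real, 'n) vec"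
    and E :: "('p \<times> 'p) set" and B :: nat
    and lam0 mu0 lam mu Delta phi :: real
    and thetahat :: "(real, 'p) vec"
  assumes edges: "\<forall>(i, j)\<in>E. i < j"
    and B_bound: "\<forall>j. card {e \<in> local_edges E a. Drow e $ j \<noteq> 0} \<le> B"
    and model: "obs_col X a = obs_minus X a *v theta0 + eps"
    and Delta_pos: "Delta > 0" and phi_pos: "phi > 0"
    and compat: "compatible X a {j. theta0 $ j \<noteq> 0} Delta phi"
    and lam0_pos: "lam0 > 0" and mu0_pos: "mu0 > 0"
    and event: "\<forall>j. j \<noteq> a \<longrightarrow>
        2 / real CARD('n) * \<bar>eps \<bullet> column j (obs_minus X a)\<bar> \<le> lam0 + real B * mu0"
    and lam_ge: "lam \<ge> 2 * lam0" and mu_ge: "mu \<ge> 2 * mu0"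
    and lam_ge2: "lam \<ge> (3 + 14 / Delta) * real B * mu"
    and minimizer: "\<forall>v. objective X a E lam mu thetahat \<le> objective X a E lam mu v"
  shows "(1 / real CARD('n)) * (norm (obs_minus X a *v (thetahat - theta0)))\<^sup>2
           + (lam - 3 * real B * mu) * l1norm (thetahat - theta0)
         \<le> real (card {j. theta0 $ j \<noteq> 0}) * (2 * lam + real B * mu)\<^sup>2 / phi\<^sup>2"
proof -
  define S where "S = {j. theta0 $ j \<noteq> 0}"
  define d where "d = thetahat - theta0"
  define A where "A = 1 / real CARD('n) * (norm (obs_minus X a *v d))\<^sup>2"
  have "0 < lam" "0 < mu" "0 \<le> A" using lam_ge mu_ge lam0_pos mu0_pos by (simp_all add: A_def)
  have "2 * (lam0 + real B * mu0) \<le> lam + real B * mu"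
    using lam_ge mult_left_mono[OF mu_ge, of "real B"] by simp
  moreover have "restrict_vec (-S) theta0 = 0"
    by (simp add: S_def restrict_vec_def vec_eq_iff)
  ultimately have key: "2 * A + (lam - 3 * (real B * mu)) * l1norm (restrict_vec (-S) d)
      \<le> (3 * lam + 3 * (real B * mu)) * l1norm (restrict_vec S d)"
    unfolding A_def d_def using lam0_pos mu0_pos \<open>0 < lam\<close> \<open>0 < mu\<close>
    by (intro fused_lasso_key_inequality[OF B_bound model event _ _ _ _ minimizer[rule_format]]) auto
  have "l1norm (restrict_vec (-S) d) \<le> (3 + Delta) * l1norm (restrict_vec S d)"
    by (rule cone_condition_of_key[OF \<open>0 \<le> A\<close> l1norm_nonneg Delta_pos _ \<open>0 < lam\<close> _ key])
      (use \<open>0 < mu\<close> lam_ge2 in \<open>simp_all add: mult.assoc\<close>)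
  then have "(l1norm (restrict_vec S d))\<^sup>2 \<le> real (card S) * A / phi\<^sup>2"
    unfolding A_def using compat[folded S_def] by (intro compatible_l1norm_restrict_le)
  from oracle_bound_of_key[OF \<open>0 \<le> A\<close> _ key this] \<open>0 < lam\<close> \<open>0 < mu\<close>
  have "A + (lam - 3 * (real B * mu)) * l1norm d \<le> real (card S) * (2 * lam + real B * mu)\<^sup>2 / phi\<^sup>2"
    by (simp add: l1norm_restrict_split[of d S])
  then show ?thesis by (simp add: A_def d_def S_def mult.assoc)
qed

end
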